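(* Let $n\ge1$ and $R=\mathbb{C}[x_{ij}:1\le i<j\le n+1]$. Let $X$ be the strictly upper triangular $(n+1)\times(n+1)$ matrix with $(i,j)$-entry $x_{ij}$ for $i<j$ and $0$ otherwise. Then the set of $2\times2$ minors of $X$ is a Gröbner basis of the ideal it generates with respect to the degree reverse lexicographic order induced by any total order of the variables.
   Context: Degree revlex order (for variables ordered $x_1>\dots>x_N$): $x^a>x^b$ if $\sum a_i>\sum b_i$, or the degrees are equal and the rightmost nonzero entry of $a-b$ is negative. *)

theory Defs
  imports Complex_Main "HOL-Library.Poly_Mapping"
begin

text \<open>Variables x_ij are indexed by pairs (i,j) with 1 \<le> i < j \<le> n+1.
  Monomials are finitely supported exponent vectors, polynomials are finitely
  supported coefficient functions on monomials (convolution product).\<close>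

type_synonym var = "nat \<times> nat"
type_synonym mon = "var \<Rightarrow>\<^sub>0 nat"
type_synonym cpoly = "mon \<Rightarrow>\<^sub>0 complex"

definition vars :: "nat \<Rightarrow> var set" where
  "vars n = {(i, j). 1 \<le> i \<and> i < j \<and> j \<le> n + 1}"

definition ring_R :: "nat \<Rightarrow> cpoly set" where
  "ring_R n = {f :: cpoly. \<forall>m :: mon \<in> Poly_Mapping.keys f. Poly_Mapping.keys m \<subseteq> vars n}"

definition var_poly :: "var \<Rightarrow> cpoly" where
  "var_poly v = Poly_Mapping.single (Poly_Mapping.single v 1) 1"

definition X_entry :: "nat \<Rightarrow> nat \<Rightarrow> cpoly" where
  "X_entry i j = (if i < j then var_poly (i, j) else 0)"

definition minors2 :: "nat \<Rightarrow> cpoly set" where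
  "minors2 n = {X_entry i j * X_entry k l - X_entry i l * X_entry k j | i k j l.
      1 \<le> i \<and> i < k \<and> k \<le> n + 1 \<and> 1 \<le> j \<and> j < l \<and> l \<le> n + 1}"

definition ideal_gen :: "nat \<Rightarrow> cpoly set \<Rightarrow> cpoly set" where
  "ideal_gen n G = {\<Sum>g\<in>H. q g * g | H q. finite H \<and> H \<subseteq> G \<and> (\<forall>g\<in>H. q g \<in> ring_R n)}"

definition mdeg :: "mon \<Rightarrow> nat" where
  "mdeg a = (\<Sum>v\<in>Poly_Mapping.keys a. Poly_Mapping.lookup a v)"

text \<open>Degree reverse lexicographic order; (u, w) \<in> gt means variable u > w.
  drl_gt gt a b means x^a > x^b: higher degree, or equal degree and the
  entry of a - b at the smallest variable where a, b differ is negative.\<close>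
definition drl_gt :: "var rel \<Rightarrow> mon \<Rightarrow> mon \<Rightarrow> bool" where
  "drl_gt gt a b \<longleftrightarrow> mdeg a > mdeg b \<or>
     (mdeg a = mdeg b \<and> (\<exists>v. Poly_Mapping.lookup a v < Poly_Mapping.lookup b v \<and>
        (\<forall>w. Poly_Mapping.lookup a w \<noteq> Poly_Mapping.lookup b w \<longrightarrow> w = v \<or> (w, v) \<in> gt)))"

definition lead_mon :: "var rel \<Rightarrow> cpoly \<Rightarrow> mon" where
  "lead_mon gt f = (THE m. m \<in> Poly_Mapping.keys f \<and> (\<forall>m' \<in> Poly_Mapping.keys f. m' \<noteq> m \<longrightarrow> drl_gt gt m m'))"

definition mon_dvd :: "mon \<Rightarrow> mon \<Rightarrow> bool" where
  "mon_dvd a b \<longleftrightarrow> (\<forall>v. Poly_Mapping.lookup a v \<le> Poly_Mapping.lookup b v)"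

definition is_groebner_basis :: "var rel \<Rightarrow> cpoly set \<Rightarrow> cpoly set \<Rightarrow> bool" where
  "is_groebner_basis gt G I \<longleftrightarrow> G \<subseteq> I \<and>
     (\<forall>f \<in> I. f \<noteq> 0 \<longrightarrow> (\<exists>g \<in> G. g \<noteq> 0 \<and> mon_dvd (lead_mon gt g) (lead_mon gt f)))"

end

theory Submission
  imports Defs
begin

text \<open>
  Read a monomial as a matrix of exponents, with margins its row and column sums, and call it
  separated if every row index occurring in it is smaller than every column index occurring in it.
  Let f \<noteq> 0 lie in the ideal and let M be its leading monomial. If M is not separated, it
  contains x_ij x_kl with j \<le> k; this monomial is itself a minor, since x_kj = 0.
  Otherwise, observe that a minor times a monomial is either a difference of two monomials with the
  same margins or a single non-separated monomial. Hence the coefficients of f summed over the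
  monomials with the margins of M give 0, and f contains a second monomial m with these margins.
  Let x_ab be the smallest variable at which m and M differ; since M is leading, M has the smaller
  exponent there. Equal margins give variables x_ad and x_cb in M with a larger exponent than
  in m, so both lie above x_ab; separatedness gives c < d, and the leading monomial x_ad x_cb of the
  minor with rows a, c and columns b, d divides M.
\<close>

lemma keys_uminus: "Poly_Mapping.keys (- f) = Poly_Mapping.keys (f :: 'a \<Rightarrow>\<^sub>0 'b::ab_group_add)"
  by (simp add: in_keys_iff set_eq_iff)

lemma poly_mapping_eq_sum_single:
  "(f :: 'a \<Rightarrow>\<^sub>0 'b::comm_monoid_add) =
     (\<Sum>t\<in>Poly_Mapping.keys f. Poly_Mapping.single t (Poly_Mapping.lookup f t))"
proof (rule poly_mapping_eqI)
  fix k
  have "(\<Sum>t\<in>Poly_Mapping.keys f. Poly_Mapping.lookup (Poly_Mapping.single t (Poly_Mapping.lookup f t)) k)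
      = (\<Sum>t\<in>Poly_Mapping.keys f. if t = k then Poly_Mapping.lookup f k else 0)"
    by (rule sum.cong) (auto simp: lookup_single when_def)
  also have "\<dots> = Poly_Mapping.lookup f k" by (simp add: in_keys_iff)
  finally show "Poly_Mapping.lookup f k =
      Poly_Mapping.lookup (\<Sum>t\<in>Poly_Mapping.keys f. Poly_Mapping.single t (Poly_Mapping.lookup f t)) k"
    by (simp add: lookup_sum)
qed

lemma le_Sum_any_nat:
  fixes g :: "'a \<Rightarrow> nat"
  assumes "finite {x. g x \<noteq> 0}"
  shows "g x \<le> Sum_any g"
proof -
  have "Sum_any g = sum g (insert x {x. g x \<noteq> 0})"
    by (rule Sum_any.expand_superset) (use assms in auto)
  then show ?thesis using assms by (simp add: member_le_sum)
qed

lemma Sum_any_eq_imp_greater_nat: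
  fixes f g :: "'a \<Rightarrow> nat"
  assumes "finite {x. f x \<noteq> 0}" "finite {x. g x \<noteq> 0}"
    and "Sum_any f = Sum_any g" "f z < g z"
  obtains x where "g x < f x"
proof -
  let ?A = "insert z ({x. f x \<noteq> 0} \<union> {x. g x \<noteq> 0})"
  have A: "finite ?A" using assms(1,2) by simp
  have "Sum_any f = sum f ?A" by (rule Sum_any.expand_superset[OF A]) auto
  moreover have "Sum_any g = sum g ?A" by (rule Sum_any.expand_superset[OF A]) auto
  ultimately have "\<not> sum f ?A < sum g ?A" using assms(3) by simp
  then have "\<not> (\<forall>x\<in>?A. f x \<le> g x)"
    using sum_strict_mono_ex1[OF A, of f g] assms(4) by blast
  then show ?thesis using that by (meson not_le)
qed

definition mons_over :: "var set \<Rightarrow> mon set" where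
  "mons_over V = {m. Poly_Mapping.keys m \<subseteq> V}"

definition revlex_witness :: "var rel \<Rightarrow> mon \<Rightarrow> mon \<Rightarrow> var \<Rightarrow> bool" where
  "revlex_witness gt a b v \<longleftrightarrow> Poly_Mapping.lookup a v < Poly_Mapping.lookup b v \<and>
     (\<forall>w. Poly_Mapping.lookup a w \<noteq> Poly_Mapping.lookup b w \<longrightarrow> w = v \<or> (w, v) \<in> gt)"

lemma drl_gt_iff_revlex_witness:
  "drl_gt gt a b \<longleftrightarrow> mdeg b < mdeg a \<or> mdeg a = mdeg b \<and> (\<exists>v. revlex_witness gt a b v)"
  by (simp add: drl_gt_def revlex_witness_def)

lemma revlex_witnessI:
  "Poly_Mapping.lookup a v < Poly_Mapping.lookup b v \<Longrightarrow>
   (\<And>w. Poly_Mapping.lookup a w \<noteq> Poly_Mapping.lookup b w \<Longrightarrow> w = v \<or> (w, v) \<in> gt) \<Longrightarrow>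
   revlex_witness gt a b v"
  unfolding revlex_witness_def by blast

lemma revlex_witness_less: "revlex_witness gt a b v \<Longrightarrow> Poly_Mapping.lookup a v < Poly_Mapping.lookup b v"
  unfolding revlex_witness_def by blast

lemma revlex_witness_above:
  "revlex_witness gt a b v \<Longrightarrow> Poly_Mapping.lookup a w \<noteq> Poly_Mapping.lookup b w \<Longrightarrow>
   w = v \<or> (w, v) \<in> gt"
  unfolding revlex_witness_def by blast

lemma revlex_witness_in_keys: "revlex_witness gt a b v \<Longrightarrow> v \<in> Poly_Mapping.keys b"
  using revlex_witness_less by (fastforce simp: in_keys_iff)

locale drl_order =
  fixes V :: "var set" and gt :: "var rel"
  assumes strict_linear_order: "strict_linear_order_on V gt"
begin

lemma gt_trans: "(u, v) \<in> gt \<Longrightarrow> (v, w) \<in> gt \<Longrightarrow> (u, w) \<in> gt"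
  using strict_linear_order by (auto simp: strict_linear_order_on_def dest: transD)

lemma gt_irrefl: "(v, v) \<notin> gt"
  using strict_linear_order unfolding strict_linear_order_on_def irrefl_def by blast

lemma gt_total: "u \<in> V \<Longrightarrow> w \<in> V \<Longrightarrow> u \<noteq> w \<Longrightarrow> (u, w) \<in> gt \<or> (w, u) \<in> gt"
  using strict_linear_order by (auto simp: strict_linear_order_on_def total_on_def)

lemma revlex_witness_asym:
  assumes u: "revlex_witness gt a b u" and w: "revlex_witness gt b a w"
  shows False
proof -
  have "Poly_Mapping.lookup a u < Poly_Mapping.lookup b u" "Poly_Mapping.lookup b w < Poly_Mapping.lookup a w"
    using u w by (blast intro: revlex_witness_less)+
  then have "u \<noteq> w" "u = w \<or> (u, w) \<in> gt" "w = u \<or> (w, u) \<in> gt"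
    using revlex_witness_above[OF w, of u] revlex_witness_above[OF u, of w] by auto
  then show False using gt_trans gt_irrefl by blast
qed

lemma drl_gt_asym: "drl_gt gt a b \<Longrightarrow> \<not> drl_gt gt b a"
  unfolding drl_gt_iff_revlex_witness using revlex_witness_asym by fastforce

lemma revlex_witness_trans_below:
  assumes u: "revlex_witness gt a b u" and w: "revlex_witness gt b c w"
    and wu: "w = u \<or> (w, u) \<in> gt"
  shows "revlex_witness gt a c u"
proof (rule revlex_witnessI)
  have "Poly_Mapping.lookup b u \<le> Poly_Mapping.lookup c u"
  proof (cases "w = u")
    case True
    then show ?thesis using revlex_witness_less[OF w] by simp
  next
    case False
    with wu have "\<not> (u = w \<or> (u, w) \<in> gt)" using gt_trans gt_irrefl by blast
    then show ?thesis using revlex_witness_above[OF w, of u] by fastforce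
  qed
  then show "Poly_Mapping.lookup a u < Poly_Mapping.lookup c u"
    using revlex_witness_less[OF u] by simp
next
  fix x assume "Poly_Mapping.lookup a x \<noteq> Poly_Mapping.lookup c x"
  then consider "Poly_Mapping.lookup a x \<noteq> Poly_Mapping.lookup b x"
    | "Poly_Mapping.lookup b x \<noteq> Poly_Mapping.lookup c x" by fastforce
  then show "x = u \<or> (x, u) \<in> gt"
  proof cases
    case 1
    then show ?thesis by (rule revlex_witness_above[OF u])
  next
    case 2
    then have "x = w \<or> (x, w) \<in> gt" by (rule revlex_witness_above[OF w])
    with wu show ?thesis using gt_trans by blast
  qed
qed

lemma revlex_witness_trans_above:
  assumes u: "revlex_witness gt a b u" and w: "revlex_witness gt b c w"
    and uw: "(u, w) \<in> gt"
  shows "revlex_witness gt a c w"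
proof (rule revlex_witnessI)
  have "\<not> (w = u \<or> (w, u) \<in> gt)" using uw gt_trans gt_irrefl by blast
  then have "Poly_Mapping.lookup a w = Poly_Mapping.lookup b w"
    using revlex_witness_above[OF u, of w] by fastforce
  then show "Poly_Mapping.lookup a w < Poly_Mapping.lookup c w"
    using revlex_witness_less[OF w] by simp
next
  fix x assume "Poly_Mapping.lookup a x \<noteq> Poly_Mapping.lookup c x"
  then consider "Poly_Mapping.lookup a x \<noteq> Poly_Mapping.lookup b x"
    | "Poly_Mapping.lookup b x \<noteq> Poly_Mapping.lookup c x" by fastforce
  then show "x = w \<or> (x, w) \<in> gt"
  proof cases
    case 1
    then have "x = u \<or> (x, u) \<in> gt" by (rule revlex_witness_above[OF u])
    with uw show ?thesis using gt_trans by blast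
  next
    case 2
    then show ?thesis by (rule revlex_witness_above[OF w])
  qed
qed

lemma revlex_witness_trans:
  assumes "revlex_witness gt a b u" "revlex_witness gt b c w" "u \<in> V" "w \<in> V"
  shows "\<exists>v. revlex_witness gt a c v"
  using gt_total[OF assms(3,4)] revlex_witness_trans_below[OF assms(1,2)]
    revlex_witness_trans_above[OF assms(1,2)] by blast

lemma drl_gt_trans:
  assumes "b \<in> mons_over V" "c \<in> mons_over V" "drl_gt gt a b" "drl_gt gt b c"
  shows "drl_gt gt a c"
proof (cases "mdeg a = mdeg b \<and> mdeg b = mdeg c")
  case True
  then obtain u w where u: "revlex_witness gt a b u" and w: "revlex_witness gt b c w"
    using assms(3,4) unfolding drl_gt_iff_revlex_witness by auto
  moreover from u w have "u \<in> V" "w \<in> V"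
    using assms(1,2) revlex_witness_in_keys unfolding mons_over_def by blast+
  ultimately have "\<exists>v. revlex_witness gt a c v"
    by (rule revlex_witness_trans)
  with True show ?thesis
    unfolding drl_gt_iff_revlex_witness by simp
next
  case False
  have "mdeg b \<le> mdeg a" "mdeg c \<le> mdeg b"
    using assms(3,4) unfolding drl_gt_def by auto
  with False have "mdeg c < mdeg a" by linarith
  then show ?thesis unfolding drl_gt_def by blast
qed

lemma drl_gt_total:
  assumes "a \<in> mons_over V" "b \<in> mons_over V" "a \<noteq> b"
  shows "drl_gt gt a b \<or> drl_gt gt b a"
proof (cases "mdeg a = mdeg b")
  case True
  let ?D = "{w. Poly_Mapping.lookup a w \<noteq> Poly_Mapping.lookup b w}"
  have "?D \<subseteq> Poly_Mapping.keys a \<union> Poly_Mapping.keys b"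
    by (auto simp: in_keys_iff)
  then have "finite ?D" "?D \<subseteq> V"
    using assms(1,2) finite_subset[of ?D] unfolding mons_over_def by auto
  moreover have "?D \<noteq> {}"
  proof
    assume "?D = {}"
    then have "a = b" by (intro poly_mapping_eqI) auto
    with assms(3) show False ..
  qed
  moreover have "transp_on ?D (\<lambda>x y. (x, y) \<in> gt)"
    by (rule transp_onI) (rule gt_trans)
  moreover have "totalp_on ?D (\<lambda>x y. (x, y) \<in> gt)"
    using \<open>?D \<subseteq> V\<close> gt_total unfolding totalp_on_def by blast
  ultimately obtain v where v: "v \<in> ?D" "\<forall>w\<in>?D. w \<noteq> v \<longrightarrow> (w, v) \<in> gt"
    using Finite_Set.bex_greatest_element[of ?D "\<lambda>x y. (x, y) \<in> gt"] by blast
  then have "revlex_witness gt a b v \<or> revlex_witness gt b a v"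
    by (metis (mono_tags, lifting) linorder_neqE_nat mem_Collect_eq revlex_witnessI)
  then show ?thesis using True unfolding drl_gt_iff_revlex_witness by (metis)
next
  case False
  then show ?thesis by (auto simp: drl_gt_iff_revlex_witness)
qed

lemma lead_mon_eqI:
  assumes "M \<in> Poly_Mapping.keys f" "\<forall>m\<in>Poly_Mapping.keys f. m \<noteq> M \<longrightarrow> drl_gt gt M m"
  shows "lead_mon gt f = M"
  unfolding lead_mon_def
proof (rule the_equality)
  fix M'
  assume M': "M' \<in> Poly_Mapping.keys f \<and> (\<forall>m\<in>Poly_Mapping.keys f. m \<noteq> M' \<longrightarrow> drl_gt gt M' m)"
  show "M' = M"
  proof (rule ccontr)
    assume "M' \<noteq> M"
    with assms M' have "drl_gt gt M M'" "drl_gt gt M' M" by auto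
    then show False using drl_gt_asym by blast
  qed
qed (use assms in blast)

lemma lead_mon_greatest:
  assumes "f \<noteq> 0" "Poly_Mapping.keys f \<subseteq> mons_over V"
  shows "lead_mon gt f \<in> Poly_Mapping.keys f"
    and "\<forall>m\<in>Poly_Mapping.keys f. m \<noteq> lead_mon gt f \<longrightarrow> drl_gt gt (lead_mon gt f) m"
proof -
  have "transp_on (Poly_Mapping.keys f) (drl_gt gt)"
    using assms(2) drl_gt_trans by (intro transp_onI) blast
  moreover have "totalp_on (Poly_Mapping.keys f) (drl_gt gt)"
    using assms(2) drl_gt_total unfolding totalp_on_def by blast
  ultimately have "\<exists>M\<in>Poly_Mapping.keys f. \<forall>m\<in>Poly_Mapping.keys f. m \<noteq> M \<longrightarrow> drl_gt gt M m"
    using Finite_Set.bex_least_element[of "Poly_Mapping.keys f" "drl_gt gt"] assms(1) by simp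
  then obtain M where
    "M \<in> Poly_Mapping.keys f" "\<forall>m\<in>Poly_Mapping.keys f. m \<noteq> M \<longrightarrow> drl_gt gt M m"
    by blast
  moreover from this have "lead_mon gt f = M" by (rule lead_mon_eqI)
  ultimately show "lead_mon gt f \<in> Poly_Mapping.keys f"
    and "\<forall>m\<in>Poly_Mapping.keys f. m \<noteq> lead_mon gt f \<longrightarrow> drl_gt gt (lead_mon gt f) m"
    by simp_all
qed

end

definition mon2 :: "var \<Rightarrow> var \<Rightarrow> mon" where
  "mon2 u w = Poly_Mapping.single u 1 + Poly_Mapping.single w 1"

lemma lookup_mon2:
  "Poly_Mapping.lookup (mon2 u w) x = (if x = u then 1 else 0) + (if x = w then 1 else 0)"
  by (simp add: mon2_def lookup_add lookup_single when_def)

lemma mdeg_mon2: "mdeg (mon2 u w) = 2"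
proof (cases "u = w")
  case True
  then have "Poly_Mapping.keys (mon2 u w) = {u}"
    by (auto simp: in_keys_iff lookup_mon2 split: if_splits)
  then show ?thesis using True by (simp add: mdeg_def lookup_mon2)
next
  case False
  then have "Poly_Mapping.keys (mon2 u w) = {u, w}"
    by (auto simp: in_keys_iff lookup_mon2 split: if_splits)
  then show ?thesis using False by (simp add: mdeg_def lookup_mon2)
qed

lemma mon_dvd_mon2:
  "u \<noteq> w \<Longrightarrow> 0 < Poly_Mapping.lookup M u \<Longrightarrow> 0 < Poly_Mapping.lookup M w \<Longrightarrow>
   mon_dvd (mon2 u w) M"
  unfolding mon_dvd_def lookup_mon2 by auto

lemma X_entry_mult:
  "i < j \<Longrightarrow> k < l \<Longrightarrow> X_entry i j * X_entry k l = Poly_Mapping.single (mon2 (i, j) (k, l)) 1"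
  by (simp add: X_entry_def var_poly_def mult_single mon2_def)

lemma lead_mon_single: "c \<noteq> 0 \<Longrightarrow> lead_mon gt (Poly_Mapping.single m c) = m"
  unfolding lead_mon_def by (rule the_equality) auto

context drl_order
begin

lemma drl_gt_mon2:
  assumes "u \<in> V" "w \<in> V" "u \<noteq> w" "(p, u) \<in> gt" "(q, u) \<in> gt" "p \<noteq> w" "q \<noteq> w"
  shows "drl_gt gt (mon2 p q) (mon2 u w)"
proof -
  have "p \<noteq> u" "q \<noteq> u" using assms(4,5) gt_irrefl by blast+
  have diff: "x \<in> {p, q, u, w}"
    if "Poly_Mapping.lookup (mon2 p q) x \<noteq> Poly_Mapping.lookup (mon2 u w) x" for x
    using that by (auto simp: lookup_mon2 split: if_splits)
  consider "(w, u) \<in> gt" | "(u, w) \<in> gt" using gt_total assms(1-3) by blast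
  then have "revlex_witness gt (mon2 p q) (mon2 u w) u \<or> revlex_witness gt (mon2 p q) (mon2 u w) w"
  proof cases
    case 1
    have "revlex_witness gt (mon2 p q) (mon2 u w) u"
    proof (rule revlex_witnessI)
      show "Poly_Mapping.lookup (mon2 p q) u < Poly_Mapping.lookup (mon2 u w) u"
        using \<open>p \<noteq> u\<close> \<open>q \<noteq> u\<close> by (simp add: lookup_mon2)
    qed (use diff assms(4,5) 1 in blast)
    then show ?thesis ..
  next
    case 2
    have "revlex_witness gt (mon2 p q) (mon2 u w) w"
    proof (rule revlex_witnessI)
      show "Poly_Mapping.lookup (mon2 p q) w < Poly_Mapping.lookup (mon2 u w) w"
        using assms(6,7) by (simp add: lookup_mon2)
    qed (use diff assms(4,5) 2 gt_trans in blast)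
    then show ?thesis ..
  qed
  then show ?thesis unfolding drl_gt_iff_revlex_witness mdeg_mon2 by blast
qed

end

definition minor :: "nat \<Rightarrow> nat \<Rightarrow> nat \<Rightarrow> nat \<Rightarrow> cpoly" where
  "minor i k j l = X_entry i j * X_entry k l - X_entry i l * X_entry k j"

lemma minor_in_minors2:
  "1 \<le> i \<Longrightarrow> i < k \<Longrightarrow> k \<le> n + 1 \<Longrightarrow> 1 \<le> j \<Longrightarrow> j < l \<Longrightarrow> l \<le> n + 1 \<Longrightarrow>
   minor i k j l \<in> minors2 n"
  unfolding minors2_def minor_def by blast

lemma minor_swap_rows: "minor k i j l = - minor i k j l"
  by (simp add: minor_def mult.commute)

lemma minor_swap_cols: "minor i k l j = - minor i k j l"
  by (simp add: minor_def mult.commute)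

lemma keys_minor:
  assumes "a < b" "c < d" "a < d" "c < b" "a \<noteq> c" "b \<noteq> d"
  shows "Poly_Mapping.keys (minor a c b d) = {mon2 (a, b) (c, d), mon2 (a, d) (c, b)}"
proof -
  have "mon2 (a, b) (c, d) \<noteq> mon2 (a, d) (c, b)"
  proof
    assume "mon2 (a, b) (c, d) = mon2 (a, d) (c, b)"
    then have "Poly_Mapping.lookup (mon2 (a, b) (c, d)) (a, b) = Poly_Mapping.lookup (mon2 (a, d) (c, b)) (a, b)"
      by (rule arg_cong)
    then show False using assms(5,6) by (simp add: lookup_mon2)
  qed
  then show ?thesis using assms
    by (auto simp: minor_def X_entry_mult in_keys_iff lookup_minus lookup_single when_def
        split: if_splits)
qed

lemma minor_in_minors2_up_to_sign:
  assumes "a \<in> {1..n+1}" "b \<in> {1..n+1}" "c \<in> {1..n+1}" "d \<in> {1..n+1}" "a \<noteq> c" "b \<noteq> d"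
  shows "\<exists>g\<in>minors2 n. Poly_Mapping.keys g = Poly_Mapping.keys (minor a c b d)"
proof -
  consider "a < c" "b < d" | "a < c" "d < b" | "c < a" "b < d" | "c < a" "d < b"
    using assms(5,6) by linarith
  then show ?thesis
  proof cases
    case 1
    then show ?thesis using assms minor_in_minors2 by fastforce
  next
    case 2
    then have "minor a c d b \<in> minors2 n" using assms by (intro minor_in_minors2) auto
    then show ?thesis using minor_swap_cols[of a c b d] keys_uminus by metis
  next
    case 3
    then have "minor c a b d \<in> minors2 n" using assms by (intro minor_in_minors2) auto
    then show ?thesis using minor_swap_rows[of a c b d] keys_uminus by metis
  next
    case 4
    then have "minor c a d b \<in> minors2 n" using assms by (intro minor_in_minors2) auto
    moreover have "minor c a d b = minor a c b d"
      using minor_swap_rows[of a c d b] minor_swap_cols[of a c b d] by simp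
    ultimately show ?thesis by metis
  qed
qed

lemma monomial_in_minors2:
  assumes "1 \<le> i" "i < j" "j \<le> k" "k < l" "l \<le> n + 1"
  shows "Poly_Mapping.single (mon2 (i, j) (k, l)) 1 \<in> minors2 n"
proof -
  have "minor i k j l \<in> minors2 n" using assms by (intro minor_in_minors2) auto
  moreover have "X_entry k j = 0" using assms by (simp add: X_entry_def)
  ultimately show ?thesis using assms by (simp add: minor_def X_entry_mult)
qed

lemma ring_R_iff: "f \<in> ring_R n \<longleftrightarrow> Poly_Mapping.keys f \<subseteq> mons_over (vars n)"
  by (auto simp: ring_R_def mons_over_def)

lemma ring_R_mult:
  assumes "f \<in> ring_R n" "g \<in> ring_R n"
  shows "f * g \<in> ring_R n"
proof -
  have "Poly_Mapping.keys (f * g) \<subseteq> {a + b |a b. a \<in> Poly_Mapping.keys f \<and> b \<in> Poly_Mapping.keys g}"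
    by (rule keys_mult)
  also have "\<dots> \<subseteq> mons_over (vars n)"
    using assms keys_add by (fastforce simp: ring_R_iff mons_over_def)
  finally show ?thesis by (simp add: ring_R_iff)
qed

lemma ring_R_diff:
  assumes "f \<in> ring_R n" "g \<in> ring_R n"
  shows "f - g \<in> ring_R n"
proof -
  have "Poly_Mapping.keys (f - g) \<subseteq> Poly_Mapping.keys f \<union> Poly_Mapping.keys g"
    by (auto simp: in_keys_iff lookup_minus)
  with assms show ?thesis by (auto simp: ring_R_iff)
qed

lemma ring_R_sum: "(\<And>x. x \<in> A \<Longrightarrow> f x \<in> ring_R n) \<Longrightarrow> sum f A \<in> ring_R n"
  using keys_sum[of f A] unfolding ring_R_iff by blast

lemma X_entry_in_ring_R: "1 \<le> i \<Longrightarrow> j \<le> n + 1 \<Longrightarrow> X_entry i j \<in> ring_R n"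
  by (simp add: X_entry_def var_poly_def ring_R_def vars_def)

lemma minors2_subset_ring_R: "minors2 n \<subseteq> ring_R n"
proof
  fix g assume "g \<in> minors2 n"
  then obtain i k j l where "g = minor i k j l"
    and "1 \<le> i" "k \<le> n + 1" "1 \<le> j" "l \<le> n + 1" "i < k" "j < l"
    unfolding minors2_def minor_def by blast
  then show "g \<in> ring_R n"
    unfolding minor_def by (simp add: ring_R_diff ring_R_mult X_entry_in_ring_R)
qed

lemma ideal_gen_subset_ring_R:
  assumes "G \<subseteq> ring_R n"
  shows "ideal_gen n G \<subseteq> ring_R n"
proof
  fix f assume "f \<in> ideal_gen n G"
  then obtain H q where "f = (\<Sum>g\<in>H. q g * g)" "H \<subseteq> G" "\<forall>g\<in>H. q g \<in> ring_R n"
    unfolding ideal_gen_def by blast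
  with assms show "f \<in> ring_R n" by (auto intro!: ring_R_sum ring_R_mult)
qed

lemma generator_in_ideal_gen: "g \<in> G \<Longrightarrow> g \<in> ideal_gen n G"
  unfolding ideal_gen_def
  by (rule CollectI, rule exI[of _ "{g}"], rule exI[of _ "\<lambda>_. 1"]) (simp add: ring_R_def)

definition row_deg :: "mon \<Rightarrow> nat \<Rightarrow> nat" where
  "row_deg m i = Sum_any (\<lambda>j. Poly_Mapping.lookup m (i, j))"

definition col_deg :: "mon \<Rightarrow> nat \<Rightarrow> nat" where
  "col_deg m j = Sum_any (\<lambda>i. Poly_Mapping.lookup m (i, j))"

definition margins :: "mon \<Rightarrow> (nat \<Rightarrow> nat) \<times> (nat \<Rightarrow> nat)" where
  "margins m = (row_deg m, col_deg m)"

lemma finite_row_support: "finite {j. Poly_Mapping.lookup m (i, j) \<noteq> 0}"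
proof -
  have "{j. Poly_Mapping.lookup m (i, j) \<noteq> 0} \<subseteq> snd ` Poly_Mapping.keys m"
    by (force simp: in_keys_iff)
  then show ?thesis by (rule finite_subset) simp
qed

lemma finite_col_support: "finite {i. Poly_Mapping.lookup m (i, j) \<noteq> 0}"
proof -
  have "{i. Poly_Mapping.lookup m (i, j) \<noteq> 0} \<subseteq> fst ` Poly_Mapping.keys m"
    by (force simp: in_keys_iff)
  then show ?thesis by (rule finite_subset) simp
qed

lemma row_deg_add: "row_deg (a + b) i = row_deg a i + row_deg b i"
  unfolding row_deg_def lookup_add by (rule Sum_any.distrib[OF finite_row_support finite_row_support])

lemma col_deg_add: "col_deg (a + b) j = col_deg a j + col_deg b j"
  unfolding col_deg_def lookup_add by (rule Sum_any.distrib[OF finite_col_support finite_col_support])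

lemma margins_add_cong: "margins a = margins b \<Longrightarrow> margins (t + a) = margins (t + b)"
  by (simp add: margins_def fun_eq_iff row_deg_add col_deg_add)

lemma row_deg_single: "row_deg (Poly_Mapping.single (x, y) c) i = (if i = x then c else 0)"
proof -
  have "(\<lambda>j. Poly_Mapping.lookup (Poly_Mapping.single (x, y) c) (i, j)) =
        (\<lambda>j. if j = y then (if i = x then c else 0) else 0)" (is "_ = ?h")
    by (auto simp: lookup_single when_def)
  then have "row_deg (Poly_Mapping.single (x, y) c) i = Sum_any ?h"
    by (simp only: row_deg_def)
  then show ?thesis by simp
qed

lemma col_deg_single: "col_deg (Poly_Mapping.single (x, y) c) j = (if j = y then c else 0)"
proof -
  have "(\<lambda>i. Poly_Mapping.lookup (Poly_Mapping.single (x, y) c) (i, j)) =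
        (\<lambda>i. if i = x then (if j = y then c else 0) else 0)" (is "_ = ?h")
    by (auto simp: lookup_single when_def)
  then have "col_deg (Poly_Mapping.single (x, y) c) j = Sum_any ?h"
    by (simp only: col_deg_def)
  then show ?thesis by simp
qed

lemma margins_mon2_swap: "margins (mon2 (i, j) (k, l)) = margins (mon2 (i, l) (k, j))"
  by (simp add: margins_def mon2_def fun_eq_iff row_deg_add col_deg_add row_deg_single col_deg_single)

lemma lookup_le_row_deg: "Poly_Mapping.lookup m (i, j) \<le> row_deg m i"
  unfolding row_deg_def by (rule le_Sum_any_nat[OF finite_row_support])

lemma lookup_le_col_deg: "Poly_Mapping.lookup m (i, j) \<le> col_deg m j"
  unfolding col_deg_def by (rule le_Sum_any_nat[OF finite_col_support])

lemma mdeg_eq_Sum_any_row_deg: "mdeg m = Sum_any (row_deg m)"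
proof -
  have "{v. Poly_Mapping.lookup m v \<noteq> 0} = Poly_Mapping.keys m"
    by (auto simp: in_keys_iff)
  then have "mdeg m = Sum_any (Poly_Mapping.lookup m)"
    by (simp add: mdeg_def Sum_any.expand_set)
  also have "\<dots> = Sum_any (\<lambda>(i, j). Poly_Mapping.lookup m (i, j))"
    by simp
  also have "\<dots> = Sum_any (\<lambda>i. Sum_any (\<lambda>j. Poly_Mapping.lookup m (i, j)))"
    by (rule Sum_any.cartesian_product[symmetric, of "fst ` Poly_Mapping.keys m \<times> snd ` Poly_Mapping.keys m"])
      (force simp: in_keys_iff image_iff)+
  finally show ?thesis by (simp add: row_deg_def[abs_def])
qed

definition separated :: "mon \<Rightarrow> bool" where
  "separated m \<longleftrightarrow> (\<forall>i j. 0 < row_deg m i \<longrightarrow> 0 < col_deg m j \<longrightarrow> i < j)"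

lemma separatedD:
  "separated m \<Longrightarrow> 0 < Poly_Mapping.lookup m (i, j) \<Longrightarrow> 0 < Poly_Mapping.lookup m (k, l) \<Longrightarrow>
   k < j"
  unfolding separated_def using lookup_le_row_deg[of m k l] lookup_le_col_deg[of m i j] by auto

lemma not_separatedE:
  assumes "\<not> separated m"
  obtains i j k l where "0 < Poly_Mapping.lookup m (i, j)" "0 < Poly_Mapping.lookup m (k, l)" "j \<le> k"
proof -
  from assms obtain k j where "0 < row_deg m k" "0 < col_deg m j" "j \<le> k"
    unfolding separated_def by auto
  then obtain l i where "Poly_Mapping.lookup m (k, l) \<noteq> 0" "Poly_Mapping.lookup m (i, j) \<noteq> 0"
    unfolding row_deg_def col_deg_def by (metis Sum_any.not_neutral_obtains_not_neutral less_irrefl)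
  with \<open>j \<le> k\<close> show ?thesis using that by blast
qed

definition fiber_sum :: "mon \<Rightarrow> cpoly \<Rightarrow> complex" where
  "fiber_sum M f = Sum_any (\<lambda>m. if margins m = margins M then Poly_Mapping.lookup f m else 0)"

lemma fiber_sum_add: "fiber_sum M (f + g) = fiber_sum M f + fiber_sum M g"
proof -
  have fin: "finite {m. (if margins m = margins M then Poly_Mapping.lookup h m else 0) \<noteq> 0}" for h :: cpoly
    by (rule finite_subset[of _ "Poly_Mapping.keys h"]) (auto simp: in_keys_iff)
  have "fiber_sum M (f + g) = Sum_any (\<lambda>m. (if margins m = margins M then Poly_Mapping.lookup f m else 0) +
      (if margins m = margins M then Poly_Mapping.lookup g m else 0))"
    unfolding fiber_sum_def by (rule Sum_any.cong) (simp add: lookup_add)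
  also have "\<dots> = fiber_sum M f + fiber_sum M g"
    unfolding fiber_sum_def by (rule Sum_any.distrib[OF fin fin])
  finally show ?thesis .
qed

lemma fiber_sum_zero: "fiber_sum M 0 = 0"
  using fiber_sum_add[of M 0 0] by simp

lemma fiber_sum_diff: "fiber_sum M (f - g) = fiber_sum M f - fiber_sum M g"
  using fiber_sum_add[of M "f - g" g] by simp

lemma fiber_sum_sum: "fiber_sum M (\<Sum>x\<in>A. f x) = (\<Sum>x\<in>A. fiber_sum M (f x))"
  by (induct A rule: infinite_finite_induct) (simp_all add: fiber_sum_zero fiber_sum_add)

lemma fiber_sum_single: "fiber_sum M (Poly_Mapping.single m c) = (if margins m = margins M then c else 0)"
proof -
  have "(\<lambda>m'. if margins m' = margins M then Poly_Mapping.lookup (Poly_Mapping.single m c) m' else 0) =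
        (\<lambda>m'. if m' = m then (if margins m = margins M then c else 0) else 0)" (is "_ = ?h")
    by (auto simp: lookup_single when_def)
  then have "fiber_sum M (Poly_Mapping.single m c) = Sum_any ?h"
    by (simp only: fiber_sum_def)
  then show ?thesis by simp
qed

lemma fiber_sum_mult_single:
  "fiber_sum M (q * Poly_Mapping.single P 1) =
     (\<Sum>t\<in>Poly_Mapping.keys q. if margins (t + P) = margins M then Poly_Mapping.lookup q t else 0)"
proof -
  have "q * Poly_Mapping.single P 1 =
      (\<Sum>t\<in>Poly_Mapping.keys q. Poly_Mapping.single t (Poly_Mapping.lookup q t)) * Poly_Mapping.single P 1"
    using poly_mapping_eq_sum_single[of q] by simp
  also have "\<dots> = (\<Sum>t\<in>Poly_Mapping.keys q. Poly_Mapping.single (t + P) (Poly_Mapping.lookup q t))"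
    by (simp add: sum_distrib_right mult_single)
  finally show ?thesis by (simp add: fiber_sum_sum fiber_sum_single)
qed

lemma fiber_sum_mult_minor:
  assumes "separated M" "i < k" "j < l"
  shows "fiber_sum M (q * minor i k j l) = 0"
proof (cases "k < j")
  case True
  have "margins (t + mon2 (i, j) (k, l)) = margins (t + mon2 (i, l) (k, j))" for t
    by (rule margins_add_cong[OF margins_mon2_swap])
  with True assms(2,3) show ?thesis
    by (simp add: minor_def X_entry_mult right_diff_distrib fiber_sum_diff fiber_sum_mult_single)
next
  case False
  have "fiber_sum M (q * (X_entry i j * X_entry k l)) = 0"
  proof (cases "i < j \<and> k < l")
    case True
    have "margins (t + mon2 (i, j) (k, l)) \<noteq> margins M" for t
    proof
      assume "margins (t + mon2 (i, j) (k, l)) = margins M"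
      with assms(1) have "separated (t + mon2 (i, j) (k, l))"
        by (simp add: separated_def margins_def)
      moreover have "0 < Poly_Mapping.lookup (t + mon2 (i, j) (k, l)) (i, j)"
        and "0 < Poly_Mapping.lookup (t + mon2 (i, j) (k, l)) (k, l)"
        by (simp_all add: lookup_add lookup_mon2)
      ultimately have "k < j" by (rule separatedD)
      with False show False by simp
    qed
    with True show ?thesis by (simp add: X_entry_mult fiber_sum_mult_single)
  next
    case False
    then have "X_entry i j * X_entry k l = 0" by (auto simp: X_entry_def)
    then show ?thesis by (simp add: fiber_sum_zero)
  qed
  moreover have "X_entry k j = 0" using False by (simp add: X_entry_def)
  ultimately show ?thesis by (simp add: minor_def)
qed

lemma fiber_sum_ideal_gen_minors2:
  assumes "separated M" "f \<in> ideal_gen n (minors2 n)"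
  shows "fiber_sum M f = 0"
proof -
  obtain H q where f: "f = (\<Sum>g\<in>H. q g * g)" and H: "H \<subseteq> minors2 n"
    using assms(2) unfolding ideal_gen_def by blast
  have "fiber_sum M (q g * g) = 0" if "g \<in> H" for g
  proof -
    from H that have "g \<in> minors2 n" by blast
    then obtain i k j l where "g = minor i k j l" "i < k" "j < l"
      unfolding minors2_def minor_def by blast
    then show ?thesis using fiber_sum_mult_minor[OF assms(1)] by simp
  qed
  then show ?thesis by (simp add: f fiber_sum_sum)
qed

lemma fiber_sum_eq_0_imp_other_key:
  assumes "M \<in> Poly_Mapping.keys f" "fiber_sum M f = 0"
  obtains m where "m \<in> Poly_Mapping.keys f" "m \<noteq> M" "margins m = margins M"
proof -
  have "\<exists>m\<in>Poly_Mapping.keys f. m \<noteq> M \<and> margins m = margins M"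
  proof (rule ccontr)
    assume none: "\<not> ?thesis"
    have "(\<lambda>m. if margins m = margins M then Poly_Mapping.lookup f m else 0) =
        (\<lambda>m. if m = M then Poly_Mapping.lookup f M else 0)"
    proof
      fix m show "(if margins m = margins M then Poly_Mapping.lookup f m else 0) =
          (if m = M then Poly_Mapping.lookup f M else 0)"
        using none by (cases "m = M") (auto simp: in_keys_iff)
    qed
    then have "fiber_sum M f = Sum_any (\<lambda>m. if m = M then Poly_Mapping.lookup f M else 0)"
      unfolding fiber_sum_def by (rule arg_cong)
    then have "fiber_sum M f = Poly_Mapping.lookup f M" by simp
    with assms show False by (simp add: in_keys_iff)
  qed
  with that show ?thesis by blast
qed

locale minors_drl = drl_order "vars n" gt for n :: nat and gt :: "var rel"
begin

lemma minor_lead_mon_dvd_if_not_separated: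
  assumes "M \<in> mons_over (vars n)" "\<not> separated M"
  shows "\<exists>g\<in>minors2 n. g \<noteq> 0 \<and> mon_dvd (lead_mon gt g) M"
proof -
  obtain i j k l where ij: "0 < Poly_Mapping.lookup M (i, j)" and kl: "0 < Poly_Mapping.lookup M (k, l)"
    and "j \<le> k"
    using not_separatedE[OF assms(2)] by blast
  from ij kl assms(1) have "(i, j) \<in> vars n" "(k, l) \<in> vars n"
    by (auto simp: mons_over_def in_keys_iff)
  then have "1 \<le> i" "i < j" "k < l" "l \<le> n + 1" by (auto simp: vars_def)
  let ?g = "Poly_Mapping.single (mon2 (i, j) (k, l)) (1 :: complex)"
  have "?g \<in> minors2 n"
    using \<open>1 \<le> i\<close> \<open>i < j\<close> \<open>j \<le> k\<close> \<open>k < l\<close> \<open>l \<le> n + 1\<close> by (rule monomial_in_minors2)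
  moreover have "mon_dvd (mon2 (i, j) (k, l)) M"
    using ij kl \<open>j \<le> k\<close> \<open>k < l\<close> by (intro mon_dvd_mon2) auto
  moreover have "?g \<noteq> 0" by (simp flip: keys_eq_empty)
  moreover have "lead_mon gt ?g = mon2 (i, j) (k, l)" by (simp add: lead_mon_single)
  ultimately show ?thesis by metis
qed

lemma lead_mon_binomial_minor:
  assumes "(a, b) \<in> vars n" "(a, d) \<in> vars n" "(c, b) \<in> vars n" "c < d"
    and ad: "((a, d), (a, b)) \<in> gt" and cb: "((c, b), (a, b)) \<in> gt"
  shows "\<exists>g\<in>minors2 n. g \<noteq> 0 \<and> lead_mon gt g = mon2 (a, d) (c, b)"
proof -
  have "a \<noteq> c" "b \<noteq> d" using ad cb gt_irrefl by auto
  have "(c, d) \<in> vars n" using assms(2-4) by (auto simp: vars_def)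
  have bounds: "a < b" "a < d" "c < b" "a \<in> {1..n+1}" "b \<in> {1..n+1}" "c \<in> {1..n+1}" "d \<in> {1..n+1}"
    using assms(1-3) by (auto simp: vars_def)
  obtain g where "g \<in> minors2 n" and "Poly_Mapping.keys g = Poly_Mapping.keys (minor a c b d)"
    using minor_in_minors2_up_to_sign[OF bounds(4-7) \<open>a \<noteq> c\<close> \<open>b \<noteq> d\<close>] by blast
  note \<open>Poly_Mapping.keys g = Poly_Mapping.keys (minor a c b d)\<close>
  also have "\<dots> = {mon2 (a, b) (c, d), mon2 (a, d) (c, b)}"
    using bounds(1) \<open>c < d\<close> bounds(2,3) \<open>a \<noteq> c\<close> \<open>b \<noteq> d\<close> by (rule keys_minor)
  finally have keys_g: "Poly_Mapping.keys g = {mon2 (a, b) (c, d), mon2 (a, d) (c, b)}" .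
  have "drl_gt gt (mon2 (a, d) (c, b)) (mon2 (a, b) (c, d))"
    using assms(1) \<open>(c, d) \<in> vars n\<close> ad cb \<open>a \<noteq> c\<close> \<open>b \<noteq> d\<close> by (intro drl_gt_mon2) auto
  then have "lead_mon gt g = mon2 (a, d) (c, b)"
    using keys_g by (intro lead_mon_eqI) auto
  moreover have "g \<noteq> 0" using keys_g by auto
  ultimately show ?thesis using \<open>g \<in> minors2 n\<close> by blast
qed

lemma minor_lead_mon_dvd_if_same_margins:
  assumes "M \<in> mons_over (vars n)" "m \<in> mons_over (vars n)" "separated M"
    and margins: "margins m = margins M" and witness: "revlex_witness gt M m (a, b)"
  shows "\<exists>g\<in>minors2 n. g \<noteq> 0 \<and> mon_dvd (lead_mon gt g) M"
proof -
  have less: "Poly_Mapping.lookup M (a, b) < Poly_Mapping.lookup m (a, b)"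
    using witness by (rule revlex_witness_less)
  have above: "((x, y), (a, b)) \<in> gt"
    if "Poly_Mapping.lookup m (x, y) < Poly_Mapping.lookup M (x, y)" for x y
  proof -
    from that less have "(x, y) \<noteq> (a, b)" by auto
    with that show ?thesis using revlex_witness_above[OF witness, of "(x, y)"] by auto
  qed
  from margins have "row_deg M a = row_deg m a" "col_deg M b = col_deg m b"
    by (simp_all add: margins_def)
  obtain d where d: "Poly_Mapping.lookup m (a, d) < Poly_Mapping.lookup M (a, d)"
    using Sum_any_eq_imp_greater_nat[OF finite_row_support finite_row_support
        \<open>row_deg M a = row_deg m a\<close>[unfolded row_deg_def] less] by blast
  obtain c where c: "Poly_Mapping.lookup m (c, b) < Poly_Mapping.lookup M (c, b)"
    using Sum_any_eq_imp_greater_nat[OF finite_col_support finite_col_support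
        \<open>col_deg M b = col_deg m b\<close>[unfolded col_deg_def] less] by blast
  have "(a, b) \<in> vars n"
    using revlex_witness_in_keys[OF witness] assms(2) by (auto simp: mons_over_def)
  moreover have "(a, d) \<in> vars n" "(c, b) \<in> vars n"
    using c d assms(1) by (auto simp: mons_over_def in_keys_iff)
  moreover have "c < d"
    using separatedD[OF assms(3)] c d by (metis gr_zeroI not_less_zero)
  ultimately obtain g where "g \<in> minors2 n" "g \<noteq> 0" "lead_mon gt g = mon2 (a, d) (c, b)"
    using lead_mon_binomial_minor above[OF c] above[OF d] by blast
  moreover have "mon_dvd (mon2 (a, d) (c, b)) M"
    using c d above[OF c] gt_irrefl by (intro mon_dvd_mon2) auto
  ultimately show ?thesis by metis
qed

lemma minor_lead_mon_dvd_lead_mon: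
  assumes "f \<in> ideal_gen n (minors2 n)" "f \<noteq> 0"
  shows "\<exists>g\<in>minors2 n. g \<noteq> 0 \<and> mon_dvd (lead_mon gt g) (lead_mon gt f)"
proof -
  define M where "M = lead_mon gt f"
  have "f \<in> ring_R n"
    using assms(1) ideal_gen_subset_ring_R[OF minors2_subset_ring_R] by blast
  then have keys_f: "Poly_Mapping.keys f \<subseteq> mons_over (vars n)" by (simp add: ring_R_iff)
  have M: "M \<in> Poly_Mapping.keys f" "\<forall>m\<in>Poly_Mapping.keys f. m \<noteq> M \<longrightarrow> drl_gt gt M m"
    unfolding M_def using lead_mon_greatest[OF assms(2) keys_f] by simp_all
  then have "M \<in> mons_over (vars n)" using keys_f by blast
  have "\<exists>g\<in>minors2 n. g \<noteq> 0 \<and> mon_dvd (lead_mon gt g) M"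
  proof (cases "separated M")
    case False
    with \<open>M \<in> mons_over (vars n)\<close> show ?thesis by (rule minor_lead_mon_dvd_if_not_separated)
  next
    case True
    obtain m where m: "m \<in> Poly_Mapping.keys f" "m \<noteq> M" "margins m = margins M"
      using fiber_sum_eq_0_imp_other_key[OF M(1) fiber_sum_ideal_gen_minors2[OF True assms(1)]] .
    have "drl_gt gt M m" using M(2) m(1,2) by blast
    moreover have "mdeg M = mdeg m" using m(3) by (simp add: mdeg_eq_Sum_any_row_deg margins_def)
    ultimately obtain a b where "revlex_witness gt M m (a, b)"
      unfolding drl_gt_iff_revlex_witness by auto
    moreover have "m \<in> mons_over (vars n)" using m(1) keys_f by blast
    ultimately show ?thesis
      using minor_lead_mon_dvd_if_same_margins \<open>M \<in> mons_over (vars n)\<close> True m(3) by blast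
  qed
  then show ?thesis by (simp add: M_def)
qed

end

theorem corollary6p5:
  fixes n :: nat and gt :: "var rel"
  assumes "n \<ge> 1"
    and "strict_linear_order_on (vars n) gt"
  shows "is_groebner_basis gt (minors2 n) (ideal_gen n (minors2 n))"
proof -
  interpret minors_drl n gt by unfold_locales (rule assms(2))
  show ?thesis
    unfolding is_groebner_basis_def using generator_in_ideal_gen minor_lead_mon_dvd_lead_mon by blast
qed

end
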